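(* Let $D' \in \mathrm{Sym}_n(\mathbb{R}_{\geq 0})$ and let $D^A$ be the all pairs shortest path matrix of the complete weighted graph $K_n(D')$, i.e. $D^A_{ij}$ is the minimum total weight of a path from $i$ to $j$ in $K_n(D')$. Then the perturbation $P^A := D^A - D'$ is a sparsest possible decrease only metric repair solution for $D'$; that is, $P^A \preceq 0$, $D'+P^A$ is metric, and every $P \preceq 0$ with $D'+P$ metric satisfies $\|P^A\|_0 \leq \|P\|_0$. *)

theory Defs
  imports Complex_Main
begin

text \<open>n x n real matrices are functions on a finite index type 'n (n = CARD('n)).\<close>

definition sym_nonneg :: "('n::finite \<Rightarrow> 'n \<Rightarrow> real) \<Rightarrow> bool" where
  "sym_nonneg D \<longleftrightarrow> (\<forall>i j. D i j = D j i) \<and> (\<forall>i j. 0 \<le> D i j) \<and> (\<forall>i. D i i = 0)"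

definition is_metric :: "('n::finite \<Rightarrow> 'n \<Rightarrow> real) \<Rightarrow> bool" where
  "is_metric D \<longleftrightarrow> sym_nonneg D \<and> (\<forall>i j k. D i j \<le> D i k + D k j)"

definition paths :: "'n::finite \<Rightarrow> 'n \<Rightarrow> 'n list set" where
  "paths i j = {ps. ps \<noteq> [] \<and> hd ps = i \<and> last ps = j \<and> distinct ps}"

definition path_weight :: "('n \<Rightarrow> 'n \<Rightarrow> real) \<Rightarrow> 'n list \<Rightarrow> real" where
  "path_weight D ps = (\<Sum>(a, b)\<leftarrow>zip ps (tl ps). D a b)"

definition apsp :: "('n::finite \<Rightarrow> 'n \<Rightarrow> real) \<Rightarrow> 'n \<Rightarrow> 'n \<Rightarrow> real" where
  "apsp D i j = Min (path_weight D ` paths i j)"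

definition nonpos_mat :: "('n \<Rightarrow> 'n \<Rightarrow> real) \<Rightarrow> bool" where
  "nonpos_mat P \<longleftrightarrow> (\<forall>i j. P i j \<le> 0)"

definition norm0 :: "('n::finite \<Rightarrow> 'n \<Rightarrow> real) \<Rightarrow> nat" where
  "norm0 P = card {(i, j). P i j \<noteq> 0}"

end

theory Submission
  imports Defs
begin

text \<open>
  Write \<open>A = apsp D'\<close>. Concatenating shortest paths and shortcutting repeated vertices,
  which is harmless since weights are nonnegative, shows that \<open>A\<close> is a metric, and the
  one-edge path gives \<open>A \<le> D'\<close>. Conversely, any metric \<open>M \<le> D'\<close> is bounded along every
  path by the path weight (triangle inequality), so \<open>M \<le> A\<close>: \<open>A\<close> is the largest metric
  below \<open>D'\<close>. Hence if a decrease-only repair \<open>P\<close> leaves an entry untouched, then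
  \<open>D' i j = M i j \<le> A i j \<le> D' i j\<close>, so \<open>P\<^sup>A\<close> leaves it untouched as well, and the support
  of \<open>P\<^sup>A\<close> is contained in that of \<open>P\<close>.
\<close>

lemma path_weight_singleton [simp]: "path_weight D [x] = 0"
  by (simp add: path_weight_def)

lemma path_weight_Cons_Cons [simp]: "path_weight D (x # y # ys) = D x y + path_weight D (y # ys)"
  by (simp add: path_weight_def)

lemma path_weight_append:
  "path_weight D (xs @ y # zs) = path_weight D (xs @ [y]) + path_weight D (y # zs)"
proof (induction xs)
  case Nil
  then show ?case by simp
next
  case (Cons x xs)
  then show ?case by (cases xs) auto
qed

lemma path_weight_concat:
  assumes "p \<noteq> []" "q \<noteq> []" "last p = hd q"
  shows "path_weight D (p @ tl q) = path_weight D p + path_weight D q"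
proof -
  have p: "p = butlast p @ [hd q]"
    using assms append_butlast_last_id[of p] by simp
  then have "p @ tl q = butlast p @ hd q # tl q"
    by (metis append.assoc append_Cons append_Nil)
  then show ?thesis
    using path_weight_append[of D "butlast p" "hd q" "tl q"] p \<open>q \<noteq> []\<close> by simp
qed

lemma path_weight_nonneg: "(\<And>a b. 0 \<le> D a b) \<Longrightarrow> 0 \<le> path_weight D ps"
  unfolding path_weight_def by (rule sum_list_nonneg) auto

lemma path_weight_mono: "(\<And>a b. M a b \<le> D a b) \<Longrightarrow> path_weight M ps \<le> path_weight D ps"
  unfolding path_weight_def by (rule sum_list_mono) auto

lemma path_weight_rev:
  assumes sym: "\<And>a b. D a b = D b a"
  shows "path_weight D (rev ps) = path_weight D ps"
proof (induction ps rule: induct_list012)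
  case (3 x y ys)
  have "path_weight D (rev (x # y # ys)) = path_weight D (rev (y # ys) @ [x])"
    by simp
  also have "\<dots> = path_weight D (rev (y # ys)) + D y x"
    using path_weight_append[of D "rev ys" y "[x]"] by simp
  also have "\<dots> = path_weight D (x # y # ys)"
    using "3.IH"(2) sym[of x y] by simp
  finally show ?case .
qed (simp_all add: path_weight_def)

lemma metric_le_path_weight:
  assumes tri: "\<And>i j k. M i j \<le> M i k + M k j" and diag: "\<And>i. M i i = 0"
  shows "ps \<noteq> [] \<Longrightarrow> M (hd ps) (last ps) \<le> path_weight M ps"
proof (induction ps rule: induct_list012)
  case (3 x y ys)
  have "M x (last (y # ys)) \<le> M x y + M y (last (y # ys))"
    by (rule tri)
  with "3.IH"(2) show ?case by simp
qed (simp_all add: diag)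

lemma finite_paths: "finite (paths (i :: 'a::finite) j)"
proof (rule finite_subset)
  show "paths i j \<subseteq> {xs. set xs \<subseteq> UNIV \<and> length xs \<le> card (UNIV :: 'a set)}"
  proof
    fix xs
    assume "xs \<in> paths i j"
    then have "length xs = card (set xs)"
      by (simp add: paths_def distinct_card)
    also have "\<dots> \<le> card (UNIV :: 'a set)"
      by (rule card_mono) auto
    finally show "xs \<in> {xs. set xs \<subseteq> UNIV \<and> length xs \<le> card (UNIV :: 'a set)}"
      by simp
  qed
  show "finite {xs. set xs \<subseteq> (UNIV :: 'a set) \<and> length xs \<le> card (UNIV :: 'a set)}"
    by (rule finite_lists_length_le) simp
qed

lemma Cons_Cons_in_paths: "i \<noteq> j \<Longrightarrow> [i, j] \<in> paths i j"
  and singleton_in_paths: "[i] \<in> paths i i"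
  by (simp_all add: paths_def)

lemma paths_nonempty: "paths i j \<noteq> {}"
  using Cons_Cons_in_paths[of i j] singleton_in_paths[of i] by (cases "i = j") auto

lemma apsp_le_path_weight: "ps \<in> paths i j \<Longrightarrow> apsp D i j \<le> path_weight D ps"
  unfolding apsp_def using finite_paths by (intro Min_le) auto

lemma apsp_attained:
  obtains ps where "ps \<in> paths i j" "apsp D i j = path_weight D ps"
proof -
  have "apsp D i j \<in> path_weight D ` paths i j"
    unfolding apsp_def using finite_paths paths_nonempty by (intro Min_in) auto
  then show ?thesis using that by blast
qed

lemma apsp_le_walk_weight:
  assumes nonneg: "\<And>a b. 0 \<le> D a b"
  shows "ps \<noteq> [] \<Longrightarrow> apsp D (hd ps) (last ps) \<le> path_weight D ps"
proof (induction ps rule: length_induct)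
  case (1 ps)
  show ?case
  proof (cases "distinct ps")
    case True
    with "1.prems" have "ps \<in> paths (hd ps) (last ps)"
      by (simp add: paths_def)
    then show ?thesis by (rule apsp_le_path_weight)
  next
    case False
    then obtain xs y ys zs where ps: "ps = xs @ [y] @ ys @ [y] @ zs"
      using not_distinct_decomp by blast
    define ps' where "ps' = xs @ y # zs"
    have endpoints: "hd ps' = hd ps" "last ps' = last ps"
      using ps unfolding ps'_def by (cases xs; cases zs; simp)+
    have "path_weight D ps =
          path_weight D (xs @ [y]) + path_weight D ((y # ys) @ [y]) + path_weight D (y # zs)"
      using ps path_weight_append[of D xs y "ys @ y # zs"] path_weight_append[of D "y # ys" y zs]
      by simp
    then have "path_weight D ps' \<le> path_weight D ps"
      using path_weight_nonneg[OF nonneg, where ps="(y # ys) @ [y]"] path_weight_append[of D xs y zs]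
      unfolding ps'_def by simp
    moreover have "length ps' < length ps" "ps' \<noteq> []"
      using ps unfolding ps'_def by simp_all
    then have "apsp D (hd ps') (last ps') \<le> path_weight D ps'"
      using "1.IH" by blast
    ultimately show ?thesis using endpoints by simp
  qed
qed

lemma apsp_le:
  assumes "\<And>i. 0 \<le> D i i"
  shows "apsp D i j \<le> D i j"
proof (cases "i = j")
  case True
  then show ?thesis
    using apsp_le_path_weight[OF singleton_in_paths, of D i] assms[of i] by simp
next
  case False
  then show ?thesis
    using apsp_le_path_weight[OF Cons_Cons_in_paths, of i j D] by simp
qed

lemma apsp_nonneg: "(\<And>a b. 0 \<le> D a b) \<Longrightarrow> 0 \<le> apsp D i j"
  by (metis apsp_attained path_weight_nonneg)

lemma apsp_diag: "(\<And>a b. 0 \<le> D a b) \<Longrightarrow> apsp D i i = 0"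
  using apsp_le_path_weight[OF singleton_in_paths, of D i] apsp_nonneg[of D i i]
  by simp

lemma apsp_sym:
  assumes sym: "\<And>a b. D a b = D b a"
  shows "apsp D i j = apsp D j i"
proof -
  have "apsp D j i \<le> apsp D i j" for i j
  proof -
    obtain p where p: "p \<in> paths i j" "apsp D i j = path_weight D p"
      by (rule apsp_attained)
    then have "rev p \<in> paths j i"
      by (auto simp: paths_def hd_rev last_rev)
    then have "apsp D j i \<le> path_weight D (rev p)"
      by (rule apsp_le_path_weight)
    then show ?thesis
      using p path_weight_rev[of D, OF sym] by simp
  qed
  then show ?thesis by (meson antisym)
qed

lemma apsp_triangle:
  assumes nonneg: "\<And>a b. 0 \<le> D a b"
  shows "apsp D i j \<le> apsp D i k + apsp D k j"
proof -
  obtain p where p: "p \<in> paths i k" "apsp D i k = path_weight D p"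
    by (rule apsp_attained)
  obtain q where q: "q \<in> paths k j" "apsp D k j = path_weight D q"
    by (rule apsp_attained)
  have "p \<noteq> []" "q \<noteq> []" "last p = hd q"
    using p(1) q(1) by (simp_all add: paths_def)
  moreover have "hd (p @ tl q) = i" "last (p @ tl q) = j"
    using p(1) q(1) by (cases q; auto simp: paths_def)+
  ultimately have "apsp D i j \<le> path_weight D (p @ tl q)"
    using apsp_le_walk_weight[OF nonneg, of "p @ tl q"] by simp
  also have "\<dots> = apsp D i k + apsp D k j"
    using path_weight_concat p q \<open>p \<noteq> []\<close> \<open>q \<noteq> []\<close> \<open>last p = hd q\<close> by simp
  finally show ?thesis .
qed

lemma is_metric_apsp:
  assumes "sym_nonneg D"
  shows "is_metric (apsp D)"
proof -
  have sym: "\<And>a b. D a b = D b a" and nonneg: "\<And>a b. 0 \<le> D a b"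
    using assms by (simp_all add: sym_nonneg_def)
  show ?thesis
    unfolding is_metric_def sym_nonneg_def
    using apsp_sym[of D, OF sym] apsp_nonneg[of D, OF nonneg] apsp_diag[of D, OF nonneg]
      apsp_triangle[of D, OF nonneg]
    by blast
qed

lemma metric_le_apsp:
  assumes "is_metric M" and below: "\<And>a b. M a b \<le> D a b"
  shows "M i j \<le> apsp D i j"
proof -
  obtain p where p: "p \<in> paths i j" "apsp D i j = path_weight D p"
    by (rule apsp_attained)
  have "M i j \<le> path_weight M p"
    using metric_le_path_weight[of M p] assms(1) p(1)
    unfolding is_metric_def sym_nonneg_def paths_def by auto
  also have "\<dots> \<le> path_weight D p"
    using below by (rule path_weight_mono)
  finally show ?thesis using p(2) by simp
qed

lemma norm0_mono: "(\<And>i j. P i j = 0 \<Longrightarrow> Q i j = 0) \<Longrightarrow> norm0 Q \<le> norm0 P"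
  unfolding norm0_def by (rule card_mono) auto

theorem mainTheorem1:
  fixes D' :: "'n::finite \<Rightarrow> 'n \<Rightarrow> real"
  assumes "sym_nonneg D'"
  defines "PA \<equiv> (\<lambda>i j. apsp D' i j - D' i j)"
  shows "nonpos_mat PA \<and> is_metric (\<lambda>i j. D' i j + PA i j) \<and>
         (\<forall>P. nonpos_mat P \<and> is_metric (\<lambda>i j. D' i j + P i j) \<longrightarrow> norm0 PA \<le> norm0 P)"
proof -
  have sym: "\<And>a b. D' a b = D' b a" and nonneg: "\<And>a b. 0 \<le> D' a b"
    using assms(1) by (simp_all add: sym_nonneg_def)
  have apsp_below: "apsp D' i j \<le> D' i j" for i j
    using apsp_le[of D' i j] nonneg by blast
  have repaired: "(\<lambda>i j. D' i j + PA i j) = apsp D'"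
    by (simp add: PA_def)
  have sparsest: "norm0 PA \<le> norm0 P"
    if "nonpos_mat P" "is_metric (\<lambda>i j. D' i j + P i j)" for P
  proof (rule norm0_mono)
    fix i j
    assume "P i j = 0"
    moreover have "D' i j + P i j \<le> apsp D' i j"
      using metric_le_apsp[OF that(2), of D' i j] that(1) by (simp add: nonpos_mat_def)
    ultimately show "PA i j = 0"
      using apsp_below[of i j] by (simp add: PA_def)
  qed
  show ?thesis
    using apsp_below is_metric_apsp[OF assms(1)] sparsest
    by (simp add: nonpos_mat_def PA_def repaired)
qed

end
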